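(* (a) Let $\phi$ be a tree formula over $A$, let $\Psi$ be the set of forest formulas of $\phi$, and suppose $\Psi$ is recognized by a homomorphism $\alpha:A^{\Delta}\to(H,V)$. Then the language defined by $\mathsf{EX}\phi$ is recognized by a homomorphism $\alpha\otimes\beta:A^{\Delta}\to(H,V)\circ(H',V')$ for some 1-definite homomorphism $\beta:(A\times H)^{\Delta}\to(H',V')$. (b) Suppose $L\subseteq H_A$ is recognized by a homomorphism $\alpha\otimes\beta:A^{\Delta}\to(H,V)\circ(H',V')$, where $\beta:(A\times H)^{\Delta}\to(H',V')$ is 1-definite, and suppose every language recognized by $\alpha$ is defined by a formula in some set $\Psi$ of forest formulas. Then $L$ is a boolean combination of languages of the form $L_\psi$ and $L_{\mathsf{EX}(a\wedge\psi)}$ with $\psi\in\Psi$ and $a\in A$.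
   Context: $A^{\Delta}=(H_A,V_A)$: free forest algebra over finite alphabet $A$ ($H_A$ forests = finite ordered sequences of finite ordered $A$-labelled trees under concatenation; $V_A$ contexts with one hole, acting by substitution); $as$ is the tree with root $a$ and child forest $s$. A forest algebra: additive monoid $H$, monoid $V$ acting faithfully on the left, containing $g\mapsto g+h$, $g\mapsto h+g$; finite forest algebras are assumed to have $H$ idempotent and commutative. A homomorphism $\gamma$ recognizes $L\subseteq H_A$ if $L=\gamma^{-1}(X)$ for some $X$. Wreath product: $(H,V)\circ(H',V')=(H\times H',V\times V'^{H})$, $(v,f)(h,h')=(vh,f(h)h')$; $\alpha\otimes\beta$ maps $a$ to $(\alpha(a),h\mapsto\beta(a,h))$, so that $\alpha\otimes\beta(s)=(\alpha(s),\beta(s^\alpha))$ where $s^\alpha$ relabels each node with subtree $at$ by $(a,\alpha(t))$. $\beta$ is 1-definite if $\beta(s)$ depends only on the set of labels of root nodes of $s$. Logic: tree and forest formulas are defined mutually: $\mathbf T$ is a forest formula; each $a\in A$ is a tree formula; forest formulas are tree formulas; both classes are closed under boolean operations; for a tree formula $\phi$, $\mathsf{EF}\phi$ and $\mathsf{EX}\phi$ are forest formulas. Semantics: all forests satisfy $\mathbf T$; $as\models_t a$; for a forest formula $\phi$, $as\models_t\phi$ iff $s\models\phi$; booleans usual; $s\models\mathsf{EF}\phi$ iff some subtree rooted at a node of $s$ satisfies $\phi$ as a tree; $s\models\mathsf{EX}\phi$ iff some subtree rooted at a root node of $s$ satisfies $\phi$. $L_\psi=\{s\in H_A:s\models\psi\}$.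 Every tree formula $\phi$ can be written as $\bigvee_{a\in A}(a\wedge\psi_a)$ with forest formulas $\psi_a$; $\Psi=\{\psi_a:a\in A\}$ is the set of forest formulas of $\phi$. A homomorphism recognizes $\Psi$ if $\alpha(s)$ determines exactly which formulas of $\Psi$ are satisfied by $s$. *)

theory Defs
  imports Main "HOL-Library.FuncSet"
begin

datatype 'a tree = Node 'a "'a tree list"
type_synonym 'a forest = "'a tree list"

fun root :: "'a tree \<Rightarrow> 'a" where "root (Node a s) = a"
fun children :: "'a tree \<Rightarrow> 'a forest" where "children (Node a s) = s"

fun labels_f :: "'a forest \<Rightarrow> 'a set" where
  "labels_f [] = {}"
| "labels_f (Node a s # ts) = insert a (labels_f s \<union> labels_f ts)"

definition roots :: "'a forest \<Rightarrow> 'a set" where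
  "roots s = root ` set s"

fun subtrees_f :: "'a forest \<Rightarrow> 'a tree set" where
  "subtrees_f [] = {}"
| "subtrees_f (Node a s # ts) = insert (Node a s) (subtrees_f s \<union> subtrees_f ts)"

text \<open>A forest algebra (H,V): H with zero and plus; V is represented (faithfully)
  as a set of extensional functions H \<rightarrow> H, composition being function composition.\<close>
record 'h falg =
  Hc :: "'h set"
  zro :: 'h
  pls :: "'h \<Rightarrow> 'h \<Rightarrow> 'h"
  Vc :: "('h \<Rightarrow> 'h) set"

definition forest_algebra :: "'h falg \<Rightarrow> bool" where
  "forest_algebra F \<longleftrightarrow>
     zro F \<in> Hc F \<and>
     (\<forall>g\<in>Hc F. \<forall>h\<in>Hc F. pls F g h \<in> Hc F) \<and>
     (\<forall>f\<in>Hc F. \<forall>g\<in>Hc F. \<forall>h\<in>Hc F. pls F (pls F f g) h = pls F f (pls F g h)) \<and>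
     (\<forall>h\<in>Hc F. pls F (zro F) h = h \<and> pls F h (zro F) = h) \<and>
     Vc F \<subseteq> (Hc F \<rightarrow>\<^sub>E Hc F) \<and>
     restrict id (Hc F) \<in> Vc F \<and>
     (\<forall>v\<in>Vc F. \<forall>w\<in>Vc F. compose (Hc F) v w \<in> Vc F) \<and>
     (\<forall>h\<in>Hc F. restrict (\<lambda>g. pls F g h) (Hc F) \<in> Vc F \<and>
                restrict (\<lambda>g. pls F h g) (Hc F) \<in> Vc F)"

definition finite_forest_algebra :: "'h falg \<Rightarrow> bool" where
  "finite_forest_algebra F \<longleftrightarrow> forest_algebra F \<and> finite (Hc F) \<and>
     (\<forall>h\<in>Hc F. pls F h h = h) \<and> (\<forall>g\<in>Hc F. \<forall>h\<in>Hc F. pls F g h = pls F h g)"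

text \<open>A homomorphism from the free forest algebra over alphabet A into F is determined
  by the images g a \<in> V of the generators a\<box>, a \<in> A.\<close>
definition hom :: "'h falg \<Rightarrow> ('a \<Rightarrow> 'h \<Rightarrow> 'h) \<Rightarrow> 'a set \<Rightarrow> bool" where
  "hom F g A \<longleftrightarrow> (\<forall>a\<in>A. g a \<in> Vc F)"

fun ev :: "'h falg \<Rightarrow> ('a \<Rightarrow> 'h \<Rightarrow> 'h) \<Rightarrow> 'a forest \<Rightarrow> 'h" where
  "ev F g [] = zro F"
| "ev F g (Node a s # ts) = pls F (g a (ev F g s)) (ev F g ts)"

definition recognizes :: "'h falg \<Rightarrow> ('a \<Rightarrow> 'h \<Rightarrow> 'h) \<Rightarrow> 'a forest set \<Rightarrow> bool" where
  "recognizes F g L \<longleftrightarrow> (\<exists>X. L = ev F g -` X)"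

definition one_definite :: "'h2 falg \<Rightarrow> 'h set \<Rightarrow> ('a \<times> 'h \<Rightarrow> 'h2 \<Rightarrow> 'h2) \<Rightarrow> bool" where
  "one_definite F' H \<beta> \<longleftrightarrow>
     (\<forall>s t. labels_f s \<subseteq> UNIV \<times> H \<longrightarrow> labels_f t \<subseteq> UNIV \<times> H \<longrightarrow>
            roots s = roots t \<longrightarrow> ev F' \<beta> s = ev F' \<beta> t)"

text \<open>Wreath product (H,V) o (H',V') = (H x H', V x V'^H).\<close>
definition wreath :: "'h falg \<Rightarrow> 'h2 falg \<Rightarrow> ('h \<times> 'h2) falg" where
  "wreath F F' =
    \<lparr> Hc = Hc F \<times> Hc F',
      zro = (zro F, zro F'),
      pls = (\<lambda>(g, g') (h, h'). (pls F g h, pls F' g' h')),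
      Vc = {restrict (\<lambda>(h, h'). (v h, f h h')) (Hc F \<times> Hc F') | v f.
              v \<in> Vc F \<and> f \<in> Hc F \<rightarrow> Vc F'} \<rparr>"

definition tensor :: "'h falg \<Rightarrow> 'h2 falg \<Rightarrow> ('a \<Rightarrow> 'h \<Rightarrow> 'h) \<Rightarrow> ('a \<times> 'h \<Rightarrow> 'h2 \<Rightarrow> 'h2)
                      \<Rightarrow> 'a \<Rightarrow> ('h \<times> 'h2 \<Rightarrow> 'h \<times> 'h2)" where
  "tensor F F' \<alpha> \<beta> a = restrict (\<lambda>(h, h'). (\<alpha> a h, \<beta> (a, h) h')) (Hc F \<times> Hc F')"

datatype 'a fml = TT | Lab 'a | Neg "'a fml" | Conj "'a fml" "'a fml" | Disj "'a fml" "'a fml"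
  | EFm "'a fml" | EXm "'a fml"

text \<open>Every formula of this syntax is a tree formula; forest formulas are those in which
  letters occur only under EFm / EXm.\<close>
fun is_forest :: "'a fml \<Rightarrow> bool" where
  "is_forest TT = True"
| "is_forest (Lab a) = False"
| "is_forest (Neg \<phi>) = is_forest \<phi>"
| "is_forest (Conj \<phi> \<psi>) = (is_forest \<phi> \<and> is_forest \<psi>)"
| "is_forest (Disj \<phi> \<psi>) = (is_forest \<phi> \<and> is_forest \<psi>)"
| "is_forest (EFm \<phi>) = True"
| "is_forest (EXm \<phi>) = True"

text \<open>Tree semantics (a forest formula holds at the tree as iff it holds at s).\<close>
fun sat_t :: "'a fml \<Rightarrow> 'a tree \<Rightarrow> bool" where
  "sat_t TT t = True"
| "sat_t (Lab b) t = (root t = b)"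
| "sat_t (Neg \<phi>) t = (\<not> sat_t \<phi> t)"
| "sat_t (Conj \<phi> \<psi>) t = (sat_t \<phi> t \<and> sat_t \<psi> t)"
| "sat_t (Disj \<phi> \<psi>) t = (sat_t \<phi> t \<or> sat_t \<psi> t)"
| "sat_t (EFm \<phi>) t = (\<exists>u\<in>subtrees_f (children t). sat_t \<phi> u)"
| "sat_t (EXm \<phi>) t = (\<exists>u\<in>set (children t). sat_t \<phi> u)"

text \<open>Forest semantics (only meaningful for forest formulas).\<close>
fun sat_f :: "'a fml \<Rightarrow> 'a forest \<Rightarrow> bool" where
  "sat_f TT s = True"
| "sat_f (Lab b) s = False"
| "sat_f (Neg \<phi>) s = (\<not> sat_f \<phi> s)"
| "sat_f (Conj \<phi> \<psi>) s = (sat_f \<phi> s \<and> sat_f \<psi> s)"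
| "sat_f (Disj \<phi> \<psi>) s = (sat_f \<phi> s \<or> sat_f \<psi> s)"
| "sat_f (EFm \<phi>) s = (\<exists>u\<in>subtrees_f s. sat_t \<phi> u)"
| "sat_f (EXm \<phi>) s = (\<exists>u\<in>set s. sat_t \<phi> u)"

definition Lang :: "'a fml \<Rightarrow> 'a forest set" where
  "Lang \<psi> = {s. sat_f \<psi> s}"

inductive_set bool_comb :: "'b set set \<Rightarrow> 'b set set" for B where
  base: "X \<in> B \<Longrightarrow> X \<in> bool_comb B"
| compl: "X \<in> bool_comb B \<Longrightarrow> - X \<in> bool_comb B"
| inter: "X \<in> bool_comb B \<Longrightarrow> Y \<in> bool_comb B \<Longrightarrow> X \<inter> Y \<in> bool_comb B"
| union: "X \<in> bool_comb B \<Longrightarrow> Y \<in> bool_comb B \<Longrightarrow> X \<union> Y \<in> bool_comb B"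

end

theory Submission
  imports Defs
begin

text \<open>
  The value of \<open>\<alpha> \<otimes> \<beta>\<close> on a forest \<open>s\<close> is \<open>(\<alpha>(s), \<beta>(s\<^sup>\<alpha>))\<close>, where \<open>s\<^sup>\<alpha>\<close> labels every
  node \<open>a t\<close> of \<open>s\<close> by \<open>(a, \<alpha>(t))\<close>; for 1-definite \<open>\<beta>\<close> the second component depends only
  on the set of root labels of \<open>s\<^sup>\<alpha>\<close>.

  (a) Since \<open>\<alpha>\<close> recognizes \<open>\<Psi>\<close>, whether a tree \<open>a t\<close> satisfies \<open>\<phi>\<close> is a property \<open>P\<close> of
  its label \<open>(a, \<alpha>(t))\<close> in \<open>s\<^sup>\<alpha>\<close>. Hence \<open>s \<models> EX \<phi>\<close> iff some root label of \<open>s\<^sup>\<alpha>\<close> has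
  property \<open>P\<close>, and this is computed by a 1-definite homomorphism into the two-element
  algebra \<open>({0, 1}, \<or>)\<close>.

  (b) Conversely, \<open>\<alpha>(s) = h\<close> is expressed by some \<open>\<psi>\<^sub>h \<in> \<Psi>\<close>, and \<open>(a, h)\<close> is a root label of
  \<open>s\<^sup>\<alpha>\<close> iff \<open>s \<models> EX (a \<and> \<psi>\<^sub>h)\<close>. These finitely many languages therefore determine the value
  of \<open>\<alpha> \<otimes> \<beta>\<close>, so \<open>L\<close> is a union of atoms of the boolean algebra they generate.
\<close>

lemma forest_algebra_zro_closed: "forest_algebra F \<Longrightarrow> zro F \<in> Hc F"
  unfolding forest_algebra_def by blast

lemma forest_algebra_pls_closed:
  "forest_algebra F \<Longrightarrow> g \<in> Hc F \<Longrightarrow> h \<in> Hc F \<Longrightarrow> pls F g h \<in> Hc F"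
  unfolding forest_algebra_def by blast

lemma hom_closed:
  assumes "forest_algebra F" "hom F g A" "a \<in> A" "h \<in> Hc F"
  shows "g a h \<in> Hc F"
proof -
  have "g a \<in> Hc F \<rightarrow>\<^sub>E Hc F"
    using assms(1-3) unfolding forest_algebra_def hom_def by blast
  then show ?thesis using assms(4) by (rule PiE_mem)
qed

lemma ev_closed:
  assumes "forest_algebra F" "hom F g A"
  shows "labels_f s \<subseteq> A \<Longrightarrow> ev F g s \<in> Hc F"
  by (induction s rule: labels_f.induct)
    (auto intro: forest_algebra_zro_closed forest_algebra_pls_closed hom_closed assms)

fun relabel :: "'h falg \<Rightarrow> ('a \<Rightarrow> 'h \<Rightarrow> 'h) \<Rightarrow> 'a forest \<Rightarrow> ('a \<times> 'h) forest" where
  "relabel F \<alpha> [] = []"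
| "relabel F \<alpha> (Node a u # ts) = Node (a, ev F \<alpha> u) (relabel F \<alpha> u) # relabel F \<alpha> ts"

lemma labels_relabel:
  assumes "forest_algebra F" "hom F \<alpha> UNIV"
  shows "labels_f (relabel F \<alpha> s) \<subseteq> UNIV \<times> Hc F"
  by (induction s rule: labels_f.induct) (simp_all add: ev_closed[OF assms])

lemma roots_relabel: "roots (relabel F \<alpha> s) = {(a, ev F \<alpha> u) | a u. Node a u \<in> set s}"
  by (induction F \<alpha> s rule: relabel.induct) (auto simp: roots_def)

lemma roots_relabel_subset:
  assumes "forest_algebra F" "hom F \<alpha> UNIV"
  shows "roots (relabel F \<alpha> s) \<subseteq> UNIV \<times> Hc F"
  unfolding roots_relabel using ev_closed[OF assms] by blast

lemma ev_wreath_tensor: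
  assumes F: "forest_algebra F" "hom F \<alpha> UNIV"
    and F': "forest_algebra F'" "hom F' \<beta> (UNIV \<times> Hc F)"
  shows "ev (wreath F F') (tensor F F' \<alpha> \<beta>) s = (ev F \<alpha> s, ev F' \<beta> (relabel F \<alpha> s))"
proof (induction s rule: labels_f.induct)
  case 1
  show ?case by (simp add: wreath_def)
next
  case (2 a u ts)
  have "ev F \<alpha> u \<in> Hc F" by (rule ev_closed[OF F]) simp
  moreover have "ev F' \<beta> (relabel F \<alpha> u) \<in> Hc F'"
    by (rule ev_closed[OF F' labels_relabel[OF F]])
  ultimately show ?case using 2 by (simp add: wreath_def tensor_def)
qed

lemma bool_comb_UNIV: "Z \<in> bool_comb B \<Longrightarrow> UNIV \<in> bool_comb B"
  using bool_comb.union[OF _ bool_comb.compl] by fastforce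

lemma bool_comb_empty: "Z \<in> bool_comb B \<Longrightarrow> {} \<in> bool_comb B"
  using bool_comb.inter[OF _ bool_comb.compl] by fastforce

lemma bool_comb_INT:
  "finite I \<Longrightarrow> UNIV \<in> bool_comb B \<Longrightarrow> (\<And>i. i \<in> I \<Longrightarrow> f i \<in> bool_comb B)
    \<Longrightarrow> (\<Inter>i\<in>I. f i) \<in> bool_comb B"
  by (induction I rule: finite_induct) (simp_all add: bool_comb.inter)

lemma bool_comb_Union:
  "finite S \<Longrightarrow> {} \<in> bool_comb B \<Longrightarrow> (\<And>X. X \<in> S \<Longrightarrow> X \<in> bool_comb B)
    \<Longrightarrow> \<Union>S \<in> bool_comb B"
  by (induction S rule: finite_induct) (simp_all add: bool_comb.union)

text \<open>\<open>Y\<close> is the union of the atoms of the boolean algebra generated by \<open>B0\<close> that it meets.\<close>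
lemma bool_comb_if_saturated:
  assumes fin: "finite B0" and sub: "B0 \<subseteq> B" and ne: "B0 \<noteq> {}"
    and sat: "\<And>s t. (\<forall>Z\<in>B0. s \<in> Z \<longleftrightarrow> t \<in> Z) \<Longrightarrow> s \<in> Y \<Longrightarrow> t \<in> Y"
  shows "Y \<in> bool_comb B"
proof -
  define atom where "atom T = (\<Inter>Z\<in>B0. if Z \<in> T then Z else - Z)" for T
  define signature where "signature s = {Z \<in> B0. s \<in> Z}" for s
  have B0_comb: "Z \<in> bool_comb B" if "Z \<in> B0" for Z
    using that sub by (blast intro: bool_comb.base)
  then have UNIV_comb: "UNIV \<in> bool_comb B" and empty_comb: "{} \<in> bool_comb B"
    using ne by (blast intro: bool_comb_UNIV bool_comb_empty)+
  have atom_comb: "atom T \<in> bool_comb B" for T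
    unfolding atom_def
    by (rule bool_comb_INT[OF fin UNIV_comb]) (simp add: B0_comb bool_comb.compl)
  have "(\<lambda>s. atom (signature s)) ` Y \<subseteq> atom ` Pow B0"
    unfolding signature_def by blast
  then have "finite ((\<lambda>s. atom (signature s)) ` Y)"
    using fin by (meson finite_Pow_iff finite_imageI finite_subset)
  then have "(\<Union>s\<in>Y. atom (signature s)) \<in> bool_comb B"
    by (rule bool_comb_Union[OF _ empty_comb]) (auto simp: atom_comb)
  moreover have "Y = (\<Union>s\<in>Y. atom (signature s))"
  proof
    show "Y \<subseteq> (\<Union>s\<in>Y. atom (signature s))"
      unfolding atom_def signature_def by auto
    show "(\<Union>s\<in>Y. atom (signature s)) \<subseteq> Y"
    proof
      fix t assume "t \<in> (\<Union>s\<in>Y. atom (signature s))"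
      then obtain s where "s \<in> Y" "t \<in> atom (signature s)" by blast
      moreover from \<open>t \<in> atom (signature s)\<close> have "\<forall>Z\<in>B0. s \<in> Z \<longleftrightarrow> t \<in> Z"
        unfolding atom_def signature_def by (auto split: if_splits)
      ultimately show "t \<in> Y" using sat by blast
    qed
  qed
  ultimately show ?thesis by simp
qed

lemma sat_t_Node_if_is_forest: "is_forest \<phi> \<Longrightarrow> sat_t \<phi> (Node a u) = sat_f \<phi> u"
  by (induction \<phi>) auto

lemma Lang_EXm_iff: "s \<in> Lang (EXm \<phi>) \<longleftrightarrow> (\<exists>a u. Node a u \<in> set s \<and> sat_t \<phi> (Node a u))"
proof -
  have "(\<exists>t\<in>set s. sat_t \<phi> t) \<longleftrightarrow> (\<exists>a u. Node a u \<in> set s \<and> sat_t \<phi> (Node a u))"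
    by (metis tree.exhaust)
  then show ?thesis by (simp add: Lang_def)
qed

lemma Lang_EXm_Conj_Lab_iff:
  "is_forest \<psi> \<Longrightarrow> s \<in> Lang (EXm (Conj (Lab a) \<psi>)) \<longleftrightarrow> (\<exists>u. Node a u \<in> set s \<and> sat_f \<psi> u)"
  by (auto simp: Lang_EXm_iff sat_t_Node_if_is_forest)

text \<open>The two-element algebra \<open>({0, 1}, \<or>)\<close>, with \<open>0 = {}\<close> and \<open>1 = M\<close>.\<close>
definition two_falg :: "'b set \<Rightarrow> 'b set falg" where
  "two_falg M = \<lparr>Hc = {{}, M}, zro = {}, pls = (\<union>), Vc = {{}, M} \<rightarrow>\<^sub>E {{}, M}\<rparr>"

definition indicator_gen :: "'b set \<Rightarrow> ('x \<Rightarrow> bool) \<Rightarrow> 'x \<Rightarrow> 'b set \<Rightarrow> 'b set" where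
  "indicator_gen M P x = (\<lambda>_\<in>{{}, M}. if P x then M else {})"

lemma forest_algebra_two_falg: "forest_algebra (two_falg M)"
  unfolding forest_algebra_def two_falg_def by (auto simp: compose_def)

lemma finite_forest_algebra_two_falg: "finite_forest_algebra (two_falg M)"
  unfolding finite_forest_algebra_def
  by (auto simp: forest_algebra_two_falg) (auto simp: two_falg_def)

lemma hom_indicator_gen: "hom (two_falg M) (indicator_gen M P) A"
  by (simp add: hom_def two_falg_def indicator_gen_def)

lemma ev_indicator_gen:
  "ev (two_falg M) (indicator_gen M P) s = (if \<exists>x\<in>roots s. P x then M else {})"
proof (induction s rule: labels_f.induct)
  case 1
  show ?case by (simp add: two_falg_def roots_def)
next
  case (2 x u ts)
  have "ev (two_falg M) (indicator_gen M P) u \<in> {{}, M}"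
    using "2.IH"(1) by simp
  then have "indicator_gen M P x (ev (two_falg M) (indicator_gen M P) u) = (if P x then M else {})"
    by (simp add: indicator_gen_def)
  moreover have "roots (Node x u # ts) = insert x (roots ts)"
    by (simp add: roots_def)
  ultimately show ?case
    using "2.IH"(2) by (simp add: two_falg_def)
qed

lemma one_definite_indicator_gen: "one_definite (two_falg M) H (indicator_gen M P)"
  by (simp add: one_definite_def ev_indicator_gen)

lemma tree_formula_factors_through_hom:
  assumes \<phi>: "\<And>a s. sat_t \<phi> (Node a s) \<longleftrightarrow> sat_f (\<psi> a) s"
    and \<psi>: "\<And>s t a. ev F \<alpha> s = ev F \<alpha> t \<Longrightarrow> sat_f (\<psi> a) s \<longleftrightarrow> sat_f (\<psi> a) t"
  obtains P where "\<And>a u. P (a, ev F \<alpha> u) \<longleftrightarrow> sat_t \<phi> (Node a u)"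
proof
  fix a u
  show "(\<lambda>(a, h). \<exists>s. ev F \<alpha> s = h \<and> sat_f (\<psi> a) s) (a, ev F \<alpha> u) \<longleftrightarrow> sat_t \<phi> (Node a u)"
    using \<psi>[of _ u a] unfolding \<phi> case_prod_conv by blast
qed

lemma recognizes_EXm_wreath_two_falg:
  assumes F: "forest_algebra F" "hom F \<alpha> UNIV" and "M \<noteq> {}"
    and P: "\<And>a u. P (a, ev F \<alpha> u) \<longleftrightarrow> sat_t \<phi> (Node a u)"
  shows "recognizes (wreath F (two_falg M)) (tensor F (two_falg M) \<alpha> (indicator_gen M P))
           (Lang (EXm \<phi>))"
proof -
  have "s \<in> Lang (EXm \<phi>) \<longleftrightarrow>
      ev (wreath F (two_falg M)) (tensor F (two_falg M) \<alpha> (indicator_gen M P)) s \<in> UNIV \<times> {M}"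
    for s
  proof -
    have "s \<in> Lang (EXm \<phi>) \<longleftrightarrow> (\<exists>a u. Node a u \<in> set s \<and> P (a, ev F \<alpha> u))"
      by (simp add: Lang_EXm_iff P)
    also have "\<dots> \<longleftrightarrow> (\<exists>x\<in>roots (relabel F \<alpha> s). P x)"
      by (auto simp: roots_relabel)
    also have "\<dots> \<longleftrightarrow> ev (two_falg M) (indicator_gen M P) (relabel F \<alpha> s) = M"
      using \<open>M \<noteq> {}\<close> by (simp add: ev_indicator_gen)
    finally show ?thesis
      by (simp add: ev_wreath_tensor[OF F forest_algebra_two_falg hom_indicator_gen])
  qed
  then show ?thesis
    unfolding recognizes_def by (intro exI[of _ "UNIV \<times> {M}"] set_eqI) simp
qed

lemma ev_wreath_tensor_eqI:
  assumes F: "forest_algebra F" "hom F \<alpha> UNIV"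
    and F': "forest_algebra F'" "hom F' \<beta> (UNIV \<times> Hc F)" "one_definite F' (Hc F) \<beta>"
    and "ev F \<alpha> s = ev F \<alpha> t" "roots (relabel F \<alpha> s) = roots (relabel F \<alpha> t)"
  shows "ev (wreath F F') (tensor F F' \<alpha> \<beta>) s = ev (wreath F F') (tensor F F' \<alpha> \<beta>) t"
  using assms(6,7) F'(3) labels_relabel[OF F]
  by (simp add: ev_wreath_tensor[OF F F'(1,2)] one_definite_def)

lemma Lang_EXm_Conj_Lab_iff_roots_relabel:
  assumes "is_forest \<psi>" and "Lang \<psi> = ev F \<alpha> -` {h}"
  shows "s \<in> Lang (EXm (Conj (Lab a) \<psi>)) \<longleftrightarrow> (a, h) \<in> roots (relabel F \<alpha> s)"
proof -
  have "sat_f \<psi> u \<longleftrightarrow> ev F \<alpha> u = h" for u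
    using assms(2) by (auto simp: Lang_def)
  then show ?thesis
    unfolding Lang_EXm_Conj_Lab_iff[OF assms(1)] roots_relabel by auto
qed

lemma bool_comb_if_recognized_by_wreath:
  assumes F: "forest_algebra F" "hom F \<alpha> UNIV" "finite (Hc F)" "finite (UNIV :: 'a set)"
    and F': "forest_algebra F'" "hom F' \<beta> (UNIV \<times> Hc F)" "one_definite F' (Hc F) \<beta>"
    and L: "recognizes (wreath F F') (tensor F F' \<alpha> \<beta>) L"
    and \<psi>: "\<And>h. is_forest (\<psi> h)" "\<And>h. Lang (\<psi> h) = ev F \<alpha> -` {h}"
    and B: "\<And>h. h \<in> Hc F \<Longrightarrow> Lang (\<psi> h) \<in> B"
      "\<And>a h. h \<in> Hc F \<Longrightarrow> Lang (EXm (Conj (Lab (a :: 'a)) (\<psi> h))) \<in> B"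
  shows "L \<in> bool_comb B"
proof -
  obtain X where L_eq: "L = ev (wreath F F') (tensor F F' \<alpha> \<beta>) -` X"
    using L unfolding recognizes_def by blast
  have ev_in_Hc: "ev F \<alpha> s \<in> Hc F" for s
    by (rule ev_closed[OF F(1,2)]) simp
  define B0 where "B0 = (\<lambda>h. Lang (\<psi> h)) ` Hc F \<union>
      (\<lambda>(a, h). Lang (EXm (Conj (Lab a) (\<psi> h)))) ` (UNIV \<times> Hc F)"
  have "finite B0" "B0 \<subseteq> B" "B0 \<noteq> {}"
    unfolding B0_def using F(3,4) B ev_in_Hc by auto
  moreover have "t \<in> L" if agree: "\<forall>Z\<in>B0. s \<in> Z \<longleftrightarrow> t \<in> Z" and "s \<in> L" for s t
  proof -
    have "Lang (\<psi> (ev F \<alpha> s)) \<in> B0"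
      unfolding B0_def using ev_in_Hc by blast
    then have "s \<in> Lang (\<psi> (ev F \<alpha> s)) \<longleftrightarrow> t \<in> Lang (\<psi> (ev F \<alpha> s))"
      using agree by blast
    then have "ev F \<alpha> s = ev F \<alpha> t"
      by (simp add: \<psi>(2))
    moreover have "(a, h) \<in> roots (relabel F \<alpha> s) \<longleftrightarrow> (a, h) \<in> roots (relabel F \<alpha> t)"
      if "h \<in> Hc F" for a h
    proof -
      have "Lang (EXm (Conj (Lab a) (\<psi> h))) \<in> B0"
        unfolding B0_def using that by blast
      then have "s \<in> Lang (EXm (Conj (Lab a) (\<psi> h))) \<longleftrightarrow> t \<in> Lang (EXm (Conj (Lab a) (\<psi> h)))"
        using agree by blast
      then show ?thesis
        by (simp add: Lang_EXm_Conj_Lab_iff_roots_relabel[OF \<psi>])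
    qed
    then have "roots (relabel F \<alpha> s) = roots (relabel F \<alpha> t)"
      using roots_relabel_subset[OF F(1,2), of s] roots_relabel_subset[OF F(1,2), of t] by blast
    ultimately have "ev (wreath F F') (tensor F F' \<alpha> \<beta>) s = ev (wreath F F') (tensor F F' \<alpha> \<beta>) t"
      by (rule ev_wreath_tensor_eqI[OF F(1,2) F'])
    then show "t \<in> L"
      using \<open>s \<in> L\<close> unfolding L_eq by simp
  qed
  ultimately show ?thesis
    by (rule bool_comb_if_saturated)
qed

theorem proposition2:
  shows "(\<forall>(F :: 'h falg) (\<alpha> :: 'a::finite \<Rightarrow> 'h \<Rightarrow> 'h) (\<phi> :: 'a fml) (\<psi> :: 'a \<Rightarrow> 'a fml).
            forest_algebra F \<and> hom F \<alpha> UNIV \<and>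
            (\<forall>a. is_forest (\<psi> a)) \<and>
            (\<forall>a s. sat_t \<phi> (Node a s) \<longleftrightarrow> sat_f (\<psi> a) s) \<and>
            (\<forall>s t. ev F \<alpha> s = ev F \<alpha> t \<longrightarrow> (\<forall>a. sat_f (\<psi> a) s \<longleftrightarrow> sat_f (\<psi> a) t))
          \<longrightarrow> (\<exists>(F' :: ('a \<times> 'h) set falg) \<beta>.
                 finite_forest_algebra F' \<and> hom F' \<beta> (UNIV \<times> Hc F) \<and>
                 one_definite F' (Hc F) \<beta> \<and>
                 recognizes (wreath F F') (tensor F F' \<alpha> \<beta>) (Lang (EXm \<phi>))))
       \<and>
       (\<forall>(F :: 'h falg) (F' :: 'h2 falg) (\<alpha> :: 'a \<Rightarrow> 'h \<Rightarrow> 'h) (\<beta> :: 'a \<times> 'h \<Rightarrow> 'h2 \<Rightarrow> 'h2)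
           (L :: 'a forest set) (\<Psi> :: 'a fml set).
            finite_forest_algebra F \<and> finite_forest_algebra F' \<and>
            hom F \<alpha> UNIV \<and> hom F' \<beta> (UNIV \<times> Hc F) \<and> one_definite F' (Hc F) \<beta> \<and>
            recognizes (wreath F F') (tensor F F' \<alpha> \<beta>) L \<and>
            (\<forall>\<psi>\<in>\<Psi>. is_forest \<psi>) \<and>
            (\<forall>L'. recognizes F \<alpha> L' \<longrightarrow> (\<exists>\<psi>\<in>\<Psi>. L' = Lang \<psi>))
          \<longrightarrow> L \<in> bool_comb ({Lang \<psi> | \<psi>. \<psi> \<in> \<Psi>} \<union>
                              {Lang (EXm (Conj (Lab a) \<psi>)) | a \<psi>. \<psi> \<in> \<Psi>}))"
proof (intro conjI allI impI; elim conjE)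
  fix F :: "'h falg" and \<alpha> :: "'a \<Rightarrow> 'h \<Rightarrow> 'h" and \<phi> \<psi>
  assume F: "forest_algebra F" "hom F \<alpha> UNIV"
    and "\<forall>a s. sat_t \<phi> (Node a s) \<longleftrightarrow> sat_f (\<psi> a) s"
    and "\<forall>s t. ev F \<alpha> s = ev F \<alpha> t \<longrightarrow> (\<forall>a. sat_f (\<psi> a) s \<longleftrightarrow> sat_f (\<psi> a) t)"
  then obtain P where "\<And>a u. P (a, ev F \<alpha> u) \<longleftrightarrow> sat_t \<phi> (Node a u)"
    using tree_formula_factors_through_hom by metis
  then have "recognizes (wreath F (two_falg {undefined}))
      (tensor F (two_falg {undefined}) \<alpha> (indicator_gen {undefined} P)) (Lang (EXm \<phi>))"
    by (intro recognizes_EXm_wreath_two_falg[OF F]) auto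
  then show "\<exists>(F' :: ('a \<times> 'h) set falg) \<beta>.
      finite_forest_algebra F' \<and> hom F' \<beta> (UNIV \<times> Hc F) \<and> one_definite F' (Hc F) \<beta> \<and>
      recognizes (wreath F F') (tensor F F' \<alpha> \<beta>) (Lang (EXm \<phi>))"
    using finite_forest_algebra_two_falg hom_indicator_gen one_definite_indicator_gen by blast
next
  fix F :: "'h falg" and F' :: "'h2 falg" and \<alpha> :: "'a \<Rightarrow> 'h \<Rightarrow> 'h" and \<beta> L \<Psi>
  assume F: "finite_forest_algebra F" "hom F \<alpha> UNIV"
    and F': "finite_forest_algebra F'" "hom F' \<beta> (UNIV \<times> Hc F)" "one_definite F' (Hc F) \<beta>"
    and L: "recognizes (wreath F F') (tensor F F' \<alpha> \<beta>) L"
    and \<Psi>: "\<forall>\<psi>\<in>\<Psi>. is_forest \<psi>" "\<forall>L'. recognizes F \<alpha> L' \<longrightarrow> (\<exists>\<psi>\<in>\<Psi>. L' = Lang \<psi>)"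
  have "recognizes F \<alpha> (ev F \<alpha> -` {h})" for h
    unfolding recognizes_def by blast
  then have "\<exists>\<psi>\<in>\<Psi>. ev F \<alpha> -` {h} = Lang \<psi>" for h
    using \<Psi>(2) by blast
  then obtain \<psi> where \<psi>: "\<And>h. \<psi> h \<in> \<Psi>" "\<And>h. Lang (\<psi> h) = ev F \<alpha> -` {h}"
    by metis
  have "forest_algebra F" "finite (Hc F)" "forest_algebra F'"
    using F(1) F'(1) by (simp_all add: finite_forest_algebra_def)
  then show "L \<in> bool_comb ({Lang \<psi> | \<psi>. \<psi> \<in> \<Psi>} \<union> {Lang (EXm (Conj (Lab a) \<psi>)) | a \<psi>. \<psi> \<in> \<Psi>})"
    using \<Psi>(1) \<psi>
    by (intro bool_comb_if_recognized_by_wreath[OF _ F(2) _ finite_UNIV _ F'(2,3) L]) blast+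
qed

end
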